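(* Let $\alpha>1$ be fixed. For a positive integer $n$ let $A=\{1,2,\dots,2^n\}$, $B=\{1,2,\dots,\lfloor n^{\alpha}\rfloor\}$, let $P_n$ be the set of primes $p\le n^{\alpha}$, and define the family $H(n)=\{h_p:A\to B\}_{p\in P_n}$ by $h_p(a)=(a\bmod p)+1$, where $a\bmod p$ is the remainder of $a$ upon division by $p$. Then for all sufficiently large $n$, the family $H(n)$ is $\frac{\alpha}{n^{\alpha-1}}$-almost universal.
   Context: A family $\{h_p:X\to Y\}_{p\in P}$ indexed by a finite set $P$ is $\varepsilon$-almost universal if for all distinct $x_1,x_2\in X$, $|\{p\in P : h_p(x_1)=h_p(x_2)\}|\le\varepsilon|P|$; equivalently, for $p$ drawn uniformly from $P$, $\Pr[h_p(x_1)=h_p(x_2)]\le\varepsilon$. *)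

theory Defs
  imports Complex_Main "HOL-Computational_Algebra.Primes"
begin

definition almost_universal ::
  "'p set \<Rightarrow> 'x set \<Rightarrow> 'y set \<Rightarrow> ('p \<Rightarrow> 'x \<Rightarrow> 'y) \<Rightarrow> real \<Rightarrow> bool" where
  "almost_universal P X Y h \<epsilon> \<longleftrightarrow>
     finite P \<and> (\<forall>p\<in>P. \<forall>x\<in>X. h p x \<in> Y) \<and>
     (\<forall>x1\<in>X. \<forall>x2\<in>X. x1 \<noteq> x2 \<longrightarrow>
        real (card {p\<in>P. h p x1 = h p x2}) \<le> \<epsilon> * real (card P))"

end

theory Submission
  imports Defs "HOL-Analysis.Analysis" "HOL-Real_Asymp.Real_Asymp"
begin

text \<open>
  Two values a \<noteq> b in {1..2^n} collide under h_p exactly when p divides |a - b| < 2^n.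
  Such a number has at most T prime factors below T and at most n ln 2 / ln T above T, so
  with T = n^(19/20) there are at most about (20/19) ln 2 * n / ln n < 3/4 * n / ln n collisions.
  On the other hand, Chebyshev's bound pi(x) ln x \<ge> 3/4 (x - 7), applied at x = n^\<alpha>, says
  that this is at most \<alpha> / n^(\<alpha> - 1) times the number of primes up to n^\<alpha>.
  Chebyshev's bound comes from an integral argument: for q(x) = x (1 - x) (2x - 1), the
  integral of q^(2k) over [0, 1] is positive, at most 108^-k, and an integer multiple of
  1 / lcm(1, ..., 6k + 1); hence 108^k \<le> lcm(1, ..., 6k + 1) \<le> (6k + 1)^pi(6k + 1).
\<close>

lemma coeff_power_Ints:
  assumes "\<And>i. coeff p i \<in> \<int>"
  shows "coeff (p ^ m) i \<in> (\<int> :: 'a :: comm_ring_1 set)"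
proof (induction m arbitrary: i)
  case 0
  then show ?case by (simp add: coeff_1)
next
  case (Suc m)
  then show ?case
    using assms by (auto simp: coeff_mult intro!: Ints_sum Ints_mult)
qed

lemma poly_has_integral_01:
  "(poly p has_integral (\<Sum>i\<le>degree p. coeff p i / real (Suc i))) {0..1}"
proof -
  define F where "F x = (\<Sum>i\<le>degree p. coeff p i * x ^ Suc i / real (Suc i))" for x :: real
  have "(F has_real_derivative poly p x) (at x)" for x
  proof -
    have "(F has_real_derivative (\<Sum>i\<le>degree p. coeff p i * (real (Suc i) * x ^ i) / real (Suc i))) (at x)"
      unfolding F_def by (intro derivative_eq_intros) auto
    then show ?thesis by (simp add: poly_altdef)
  qed
  then have "(poly p has_integral F 1 - F 0) {0..1}"
    by (intro fundamental_theorem_of_calculus)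
       (auto simp: has_real_derivative_iff_has_vector_derivative[symmetric] intro: DERIV_subset)
  then show ?thesis by (simp add: F_def)
qed

lemma integral_01_poly_times_multiple_Ints:
  assumes "\<And>i. coeff p i \<in> \<int>" and "\<And>m. m \<in> {1..Suc (degree p)} \<Longrightarrow> m dvd L"
  shows "real L * integral {0..1} (poly p) \<in> \<int>"
proof -
  have "real L * integral {0..1} (poly p) = (\<Sum>i\<le>degree p. coeff p i * (real L / real (Suc i)))"
    using poly_has_integral_01[of p] by (simp add: integral_unique sum_distrib_left mult_ac)
  also have "\<dots> = (\<Sum>i\<le>degree p. coeff p i * real (L div Suc i))"
    using assms(2) by (intro sum.cong refl) (simp add: real_of_nat_div)
  also have "\<dots> \<in> \<int>"
    using assms(1) by (intro Ints_sum Ints_mult) auto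
  finally show ?thesis .
qed

lemma cubic_square_le:
  fixes x :: real
  assumes "0 \<le> x" "x \<le> 1"
  shows "(x * (1 - x) * (2 * x - 1)) ^ 2 \<le> 1 / 108"
proof -
  define u where "u = x * (1 - x)"
  have "0 \<le> u" using assms by (simp add: u_def)
  then have "0 \<le> (1 - 6 * u) ^ 2 * (1 + 12 * u)" by simp
  moreover have "(x * (1 - x) * (2 * x - 1)) ^ 2 = u ^ 2 * (1 - 4 * u)"
    by (simp add: u_def power2_eq_square algebra_simps)
  ultimately show ?thesis
    by (simp add: power2_eq_square algebra_simps)
qed

lemma cubic_square_ge:
  fixes x :: real
  assumes "1 / 4 \<le> x" "x \<le> 1 / 3"
  shows "1 / 324 \<le> (x * (1 - x) * (2 * x - 1)) ^ 2"
proof -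
  have "0 \<le> (x - 1 / 4) * (3 / 4 - x)" using assms by simp
  moreover have "(x - 1 / 4) * (3 / 4 - x) = x * (1 - x) - 3 / 16" by (simp add: field_simps)
  ultimately have "3 / 16 \<le> x * (1 - x)" by linarith
  moreover have "1 / 3 \<le> 1 - 2 * x" using assms by simp
  ultimately have "(1 / 6) * (1 / 3) \<le> x * (1 - x) * (1 - 2 * x)"
    by (intro mult_mono) auto
  then have "(1 / 18) ^ 2 \<le> (x * (1 - x) * (1 - 2 * x)) ^ 2"
    by (intro power_mono) auto
  then show ?thesis
    by (simp add: power2_eq_square algebra_simps)
qed

lemma integral_cubic_power_bounds:
  fixes k :: nat
  defines "f \<equiv> \<lambda>x::real. (x * (1 - x) * (2 * x - 1)) ^ (2 * k)"
  shows "0 < integral {0..1} f" and "integral {0..1} f \<le> (1 / 108) ^ k"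
proof -
  have f_eq: "f x = ((x * (1 - x) * (2 * x - 1)) ^ 2) ^ k" for x
    by (simp add: f_def power_mult)
  have int: "f integrable_on {a..b}" for a b
    unfolding f_def by (intro integrable_continuous_interval continuous_intros)
  have "integral {0..1} f \<le> integral {0..1} (\<lambda>_::real. (1 / 108) ^ k)"
    by (rule integral_le[OF int integrable_const_ivl])
       (use cubic_square_le in \<open>auto simp: f_eq intro!: power_mono\<close>)
  then show "integral {0..1} f \<le> (1 / 108) ^ k" by simp
  have "(1 / 12) * (1 / 324 :: real) ^ k = integral {1/4..1/3} (\<lambda>_::real. (1 / 324) ^ k)"
    by simp
  also have "\<dots> \<le> integral {1/4..1/3} f"
    by (rule integral_le[OF integrable_const_ivl int])
       (use cubic_square_ge in \<open>auto simp: f_eq intro!: power_mono\<close>)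
  also have "\<dots> \<le> integral {0..1} f"
    by (intro integral_subset_le int) (auto simp: f_def)
  finally have "(1 / 12) * (1 / 324) ^ k \<le> integral {0..1} f" .
  moreover have "0 < (1 / 12) * (1 / 324 :: real) ^ k" by simp
  ultimately show "0 < integral {0..1} f" by linarith
qed

lemma Lcm_atLeastAtMost_ge: "108 ^ k \<le> Lcm {1..6 * k + 1 :: nat}"
proof -
  define L where "L = Lcm {1..6 * k + 1 :: nat}"
  define r :: "real poly" where "r = [:0, -1, 3, -2:] ^ (2 * k)"
  define I where "I = integral {0..1} (poly r)"
  have poly_r: "poly r = (\<lambda>x. (x * (1 - x) * (2 * x - 1)) ^ (2 * k))"
    by (auto simp: r_def algebra_simps)
  have "degree r \<le> 3 * (2 * k)"
    unfolding r_def by (rule order_trans[OF degree_power_le]) simp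
  then have "real L * I \<in> \<int>"
    unfolding I_def r_def L_def
    by (intro integral_01_poly_times_multiple_Ints coeff_power_Ints dvd_Lcm)
       (auto simp: coeff_pCons split: nat.split)
  moreover have "L \<noteq> 0"
    unfolding L_def by (subst Lcm_0_iff) auto
  then have "0 < real L * I"
    using integral_cubic_power_bounds(1)[of k] by (simp add: I_def poly_r)
  ultimately have "1 \<le> real L * I"
    using Ints_nonzero_abs_ge1[of "real L * I"] by linarith
  also have "\<dots> \<le> real L * (1 / 108) ^ k"
    using integral_cubic_power_bounds(2)[of k] by (simp add: I_def poly_r mult_left_mono)
  finally have "1 \<le> real L / 108 ^ k"
    by (simp add: power_one_over)
  then show ?thesis
    unfolding L_def by (simp add: divide_simps)
qed

lemma dvd_prod_prime_powers:
  fixes m :: nat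
  assumes "m \<noteq> 0" "finite S" "\<And>p. p \<in> S \<Longrightarrow> prime p" "prime_factors m \<subseteq> S"
    and "\<And>p. p \<in> S \<Longrightarrow> multiplicity p m \<le> e p"
  shows "m dvd (\<Prod>p\<in>S. p ^ e p)"
proof (rule multiplicity_le_imp_dvd)
  fix p :: nat
  assume p: "prime p"
  show "multiplicity p m \<le> multiplicity p (\<Prod>p\<in>S. p ^ e p)"
  proof (cases "p \<in> S")
    case True
    then show ?thesis using assms p by (simp add: multiplicity_prod_prime_powers)
  next
    case False
    then have "\<not> p dvd m" using assms p by (auto simp: prime_factors_dvd)
    then show ?thesis by (simp add: not_dvd_imp_multiplicity_0)
  qed
qed (rule assms(1))

lemma Lcm_atLeastAtMost_le:
  fixes N :: nat
  shows "Lcm {1..N} \<le> N ^ card {p. prime p \<and> p \<le> N}"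
proof (cases "N = 0")
  case False
  define S where "S = {p. prime p \<and> p \<le> N}"
  define e where "e p = Max ((\<lambda>m. multiplicity p m) ` {1..N})" for p
  define Q where "Q = (\<Prod>p\<in>S. p ^ e p)"
  have finite_S: "finite S"
    unfolding S_def by (rule finite_subset[of _ "{..N}"]) auto
  have multiplicity_le_e: "multiplicity p m \<le> e p" if "m \<in> {1..N}" for p m
    unfolding e_def using that by (intro Max_ge) auto
  have e_le: "p ^ e p \<le> N" for p
  proof -
    have "e p \<in> (\<lambda>m. multiplicity p m) ` {1..N}"
      unfolding e_def using False by (intro Max_in) auto
    then obtain m where m: "m \<in> {1..N}" "e p = multiplicity p m" by blast
    then have "p ^ e p \<le> m"
      unfolding m(2) by (intro dvd_imp_le multiplicity_dvd) auto
    with m show ?thesis by simp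
  qed
  have "m dvd Q" if m: "m \<in> {1..N}" for m
    unfolding Q_def using m finite_S multiplicity_le_e[OF m]
    by (intro dvd_prod_prime_powers) (auto simp: S_def prime_factors_dvd dest: dvd_imp_le)
  then have "Lcm {1..N} dvd Q" by (rule Lcm_least)
  moreover have "Q > 0"
    unfolding Q_def using finite_S by (intro prod_pos) (auto simp: S_def prime_gt_0_nat)
  ultimately have "Lcm {1..N} \<le> Q" by (rule dvd_imp_le)
  also have "\<dots> \<le> (\<Prod>p\<in>S. N)"
    unfolding Q_def by (intro prod_mono) (simp add: e_le)
  finally show ?thesis by (simp add: S_def)
qed (simp add: Collect_conv_if)

lemma ln_108_ge: "9 / 2 \<le> ln (108 :: real)"
proof -
  have "exp (9 / 2 :: real) ^ 2 = exp 1 ^ 9"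
    by (simp flip: exp_of_nat_mult)
  also have "\<dots> \<le> (272 / 100) ^ 9"
    using e_less_272 by (intro power_mono) auto
  also have "\<dots> \<le> 108 ^ 2" by (simp add: power_divide)
  finally have "exp (9 / 2 :: real) \<le> 108"
    by (rule power2_le_imp_le) simp
  then have "ln (exp (9 / 2)) \<le> ln (108 :: real)"
    by (subst ln_le_cancel_iff) auto
  then show ?thesis by simp
qed

lemma Chebyshev_lower_bound:
  fixes x :: real
  assumes "1 \<le> x"
  shows "3 / 4 * (x - 7) \<le> card {p. prime p \<and> real p \<le> x} * ln x"
proof (cases "x < 7")
  case False
  define P where "P = {p. prime p \<and> real p \<le> x}"
  define k where "k = (nat \<lfloor>x\<rfloor> - 1) div 6"
  define N where "N = 6 * k + 1"
  have N_le: "real N \<le> x" and k_ge: "x - 7 \<le> 6 * real k"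
    unfolding N_def k_def using False by linarith+
  have "finite P"
    unfolding P_def by (rule finite_subset[of _ "{..nat \<lfloor>x\<rfloor>}"]) (auto simp: le_nat_floor)
  then have "card {p. prime p \<and> p \<le> N} \<le> card P"
    using N_le by (intro card_mono) (auto simp: P_def)
  have "(108 :: real) ^ k \<le> Lcm {1..N}"
    unfolding N_def using Lcm_atLeastAtMost_ge[of k] by (metis of_nat_le_iff of_nat_numeral of_nat_power)
  also have "\<dots> \<le> real N ^ card {p. prime p \<and> p \<le> N}"
    using Lcm_atLeastAtMost_le[of N] by (metis of_nat_le_iff of_nat_power)
  also have "\<dots> \<le> x ^ card P"
    using N_le \<open>card {p. prime p \<and> p \<le> N} \<le> card P\<close> assms
    by (intro order_trans[OF power_mono power_increasing]) (auto simp: N_def)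
  finally have "ln (108 ^ k) \<le> ln (x ^ card P)"
    using assms by (subst ln_le_cancel_iff) auto
  then have "real k * ln 108 \<le> card P * ln x"
    using assms by (simp add: ln_realpow)
  moreover have "3 / 4 * (x - 7) \<le> real k * (9 / 2)"
    using k_ge by simp
  moreover have "real k * (9 / 2) \<le> real k * ln 108"
    using ln_108_ge by (intro mult_left_mono) auto
  ultimately show ?thesis by (simp add: P_def)
next
  case True
  then have "3 / 4 * (x - 7) \<le> 0" by simp
  also have "0 \<le> card {p. prime p \<and> real p \<le> x} * ln x"
    using assms by simp
  finally show ?thesis .
qed

lemma card_prime_factors_le:
  fixes D :: nat and T :: real
  assumes "0 < D" "1 < T"
  shows "card (prime_factors D) \<le> T + ln D / ln T"
proof -
  define small where "small = {p \<in> prime_factors D. real p \<le> T}"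
  define large where "large = {p \<in> prime_factors D. T < real p}"
  have "prime_factors D = small \<union> large"
    unfolding small_def large_def by auto
  then have "card (prime_factors D) \<le> card small + card large"
    by (metis card_Un_le)
  moreover have "card small \<le> T"
  proof -
    have "small \<subseteq> {1..nat \<lfloor>T\<rfloor>}"
      unfolding small_def using prime_ge_1_nat
      by (auto simp: le_nat_floor dest: in_prime_factors_imp_prime)
    then have "card small \<le> nat \<lfloor>T\<rfloor>"
      by (metis card_atLeastAtMost card_mono diff_Suc_1 finite_atLeastAtMost)
    then show ?thesis using assms(2) by linarith
  qed
  moreover have "card large \<le> ln D / ln T"
  proof -
    have "\<Prod>large dvd \<Prod>(prime_factors D)"
      by (rule prod_dvd_prod_subset) (auto simp: large_def)
    also have "\<dots> dvd (\<Prod>p\<in>prime_factors D. p ^ multiplicity p D)"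
      by (intro prod_dvd_prod dvd_power) (auto simp: prime_factors_multiplicity)
    also have "\<dots> = D"
      using assms(1) by (simp add: prod_prime_factors)
    finally have "\<Prod>large \<le> D"
      using assms(1) by (rule dvd_imp_le)
    have "T ^ card large = (\<Prod>p\<in>large. T)" by simp
    also have "\<dots> \<le> (\<Prod>p\<in>large. real p)"
      using assms(2) by (intro prod_mono) (auto simp: large_def)
    also have "\<dots> \<le> D"
      using \<open>\<Prod>large \<le> D\<close> by (simp flip: of_nat_prod)
    finally have "card large * ln T \<le> ln D"
      using assms by (simp add: ln_le_cancel_iff flip: ln_realpow)
    then show ?thesis
      using assms(2) by (simp add: field_simps)
  qed
  ultimately show ?thesis by linarith
qed

lemma prime_factors_diff:
  fixes a b :: nat
  assumes "b < a"
  shows "prime_factors (a - b) = {p. prime p \<and> a mod p = b mod p}"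
  using assms by (auto simp: prime_factors_dvd mod_eq_dvd_iff_nat)

lemma Chebyshev_lower_bound_powr:
  fixes x \<alpha> :: real
  assumes "1 < x" "1 \<le> \<alpha>"
  shows "3 / 4 * (x - 7) / ln x \<le> \<alpha> / x powr (\<alpha> - 1) * card {p. prime p \<and> real p \<le> x powr \<alpha>}"
proof -
  define c where "c = real (card {p. prime p \<and> real p \<le> x powr \<alpha>})"
  have x_powr: "x powr \<alpha> = x * x powr (\<alpha> - 1)"
    using powr_add[of x 1 "\<alpha> - 1"] assms(1) by simp
  have y: "1 \<le> x powr (\<alpha> - 1)"
    using assms by (simp add: ge_one_powr_ge_zero)
  have "3 / 4 * (x - 7) * x powr (\<alpha> - 1) = 3 / 4 * (x powr \<alpha> - 7 * x powr (\<alpha> - 1))"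
    unfolding x_powr by (simp add: field_simps)
  also have "\<dots> \<le> 3 / 4 * (x powr \<alpha> - 7)"
    using y by simp
  also have "\<dots> \<le> c * ln (x powr \<alpha>)"
    unfolding c_def using assms by (intro Chebyshev_lower_bound) (simp add: ge_one_powr_ge_zero)
  also have "\<dots> = \<alpha> * c * ln x"
    using assms(1) by (simp add: ln_powr)
  finally show ?thesis
    using assms(1) y by (simp add: c_def field_simps)
qed

lemma almost_universal_mod_primes:
  fixes n :: nat and \<alpha> T :: real
  assumes "1 \<le> \<alpha>" "1 < n" "1 < T"
    and balance: "T + n * ln 2 / ln T \<le> 3 / 4 * (real n - 7) / ln n"
  shows "almost_universal {p. prime p \<and> real p \<le> real n powr \<alpha>} {1..2 ^ n}
           {1..nat \<lfloor>real n powr \<alpha>\<rfloor>} (\<lambda>p a. a mod p + 1) (\<alpha> / real n powr (\<alpha> - 1))"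
proof -
  define P where "P = {p. prime p \<and> real p \<le> real n powr \<alpha>}"
  have P_le: "p \<le> nat \<lfloor>real n powr \<alpha>\<rfloor>" if "p \<in> P" for p
    using that by (simp add: P_def le_nat_floor)
  have collisions:
    "card {p \<in> P. a mod p = b mod p} \<le> \<alpha> / real n powr (\<alpha> - 1) * card P"
    if "b < a" "a \<le> 2 ^ n" for a b :: nat
  proof -
    have "real (a - b) \<le> 2 ^ n"
      using that(2) by (metis diff_le_self order_trans of_nat_le_iff of_nat_numeral of_nat_power)
    then have "ln (a - b) \<le> n * ln 2"
      using that(1) by (simp flip: ln_realpow)
    have "card {p \<in> P. a mod p = b mod p} \<le> card (prime_factors (a - b))"
      using that(1) by (intro card_mono finite_set_mset) (auto simp: P_def prime_factors_diff)
    also have "\<dots> \<le> T + ln (a - b) / ln T"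
      using that(1) assms(3) by (intro card_prime_factors_le) auto
    also have "\<dots> \<le> T + n * ln 2 / ln T"
      using \<open>ln (a - b) \<le> n * ln 2\<close> assms(3) by (simp add: divide_right_mono)
    also have "\<dots> \<le> 3 / 4 * (real n - 7) / ln n"
      by (rule balance)
    also have "\<dots> \<le> \<alpha> / real n powr (\<alpha> - 1) * card P"
      unfolding P_def using assms by (intro Chebyshev_lower_bound_powr) auto
    finally show ?thesis by simp
  qed
  show ?thesis
    unfolding almost_universal_def P_def[symmetric]
  proof (intro conjI ballI impI)
    show "finite P"
      by (rule finite_subset[of _ "{..nat \<lfloor>real n powr \<alpha>\<rfloor>}"]) (use P_le in auto)
    show "a mod p + 1 \<in> {1..nat \<lfloor>real n powr \<alpha>\<rfloor>}" if "p \<in> P" for p a :: nat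
    proof -
      have "a mod p < p"
        using that by (simp add: P_def prime_gt_0_nat)
      with P_le[OF that] show ?thesis by simp
    qed
    show "card {p \<in> P. a mod p + 1 = b mod p + 1} \<le> \<alpha> / real n powr (\<alpha> - 1) * card P"
      if "a \<in> {1..2 ^ n}" "b \<in> {1..2 ^ n}" "a \<noteq> b" for a b :: nat
    proof (cases "b < a")
      case True
      then show ?thesis
        unfolding add_right_cancel using that by (intro collisions) auto
    next
      case False
      then have "{p \<in> P. a mod p + 1 = b mod p + 1} = {p \<in> P. b mod p = a mod p}" by auto
      then show ?thesis
        using that False by (simp only:) (intro collisions; auto)
    qed
  qed
qed

lemma ln_2_le: "ln (2 :: real) \<le> 7 / 10"
proof -
  have "(2 :: real) \<le> (1 + 1 / 100) ^ 70" by (simp add: power_divide)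
  also have "\<dots> \<le> exp (1 / 100) ^ 70"
    by (intro power_mono exp_ge_add_one_self) auto
  also have "\<dots> = exp (7 / 10)"
    by (simp flip: exp_of_nat_mult)
  finally have "ln 2 \<le> ln (exp (7 / 10 :: real))"
    by (subst ln_le_cancel_iff) auto
  then show ?thesis by simp
qed

(* Any exponent \<beta> < 1 with ln 2 / \<beta> < 3/4 would do in place of 19/20. *)
lemma eventually_threshold_balance:
  "\<forall>\<^sub>F n in sequentially. \<exists>T > 1. T + n * ln 2 / ln T \<le> 3 / 4 * (real n - 7) / ln n"
proof -
  have "\<forall>\<^sub>F x::real in at_top. x powr (19/20) + 7/10 * x / (19/20 * ln x) \<le> 3/4 * (x - 7) / ln x"
    by real_asymp
  then have "\<forall>\<^sub>F n in sequentially.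
      real n powr (19/20) + 7/10 * n / (19/20 * ln n) \<le> 3/4 * (real n - 7) / ln n"
    using filterlim_real_sequentially by (rule eventually_compose_filterlim)
  then show ?thesis
    using eventually_ge_at_top[of 2]
  proof eventually_elim
    case (elim n)
    define T where "T = real n powr (19/20)"
    have "1 < T"
      using elim(2) by (simp add: T_def)
    have "n * ln 2 / ln T \<le> n * (7/10) / ln T"
      using ln_2_le \<open>1 < T\<close> by (intro divide_right_mono mult_left_mono) auto
    also have "\<dots> = 7/10 * n / (19/20 * ln n)"
      using elim(2) by (simp add: T_def ln_powr mult.commute)
    finally have "T + n * ln 2 / ln T \<le> 3/4 * (real n - 7) / ln n"
      using elim(1) unfolding T_def by linarith
    with \<open>1 < T\<close> show ?case by blast
  qed
qed

theorem lemma4: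
  fixes \<alpha> :: real
  assumes "\<alpha> > 1"
  shows "\<forall>\<^sub>F n in sequentially.
           almost_universal {p::nat. prime p \<and> real p \<le> real n powr \<alpha>}
             {1..(2::nat) ^ n} {1..nat \<lfloor>real n powr \<alpha>\<rfloor>}
             (\<lambda>p a. a mod p + 1) (\<alpha> / real n powr (\<alpha> - 1))"
  using eventually_threshold_balance eventually_ge_at_top[of 2]
proof eventually_elim
  case (elim n)
  then obtain T where "1 < T" "T + n * ln 2 / ln T \<le> 3 / 4 * (real n - 7) / ln n"
    by blast
  with elim(2) assms show ?case
    by (intro almost_universal_mod_primes) auto
qed

end
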